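(* Let $n\ge1$, let $(p_j,u_j)$, $0\le j\le n$, be the coordinates of the trajectory $T_n$, and put $\|j\|=\min(j,n-j)$. Then for $0\le j\le n$, $$|p_j-1|\le 2^{-\|j\|}\qquad\text{and}\qquad 0<1-p_ju_j\le \phi\,2^{-\|j\|},$$ where $\phi=(1+\sqrt5)/2$.
   Context: $\Phi$ is the partial map of $\mathbb{R}^2$ defined for $p\ne0$ by $\Phi(p,u)=\bigl(p^2(u+1)-1,\ 1/p\bigr)$. For $n\ge1$, the trajectory $T_n$ is the (existing and unique) finite sequence $(p_j,u_j)$, $j=0,\dots,n$, with $(p_j,u_j)=\Phi(p_{j-1},u_{j-1})$ for $1\le j\le n$, $u_0=0$, $p_n=0$, and $p_j>0$ for $0\le j\le n-1$. *)

theory Defs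
  imports Complex_Main
begin

text \<open>The partial map Phi(p,u) = (p^2 (u+1) - 1, 1/p), meaningful for p \<noteq> 0.\<close>
definition Phi :: "real \<times> real \<Rightarrow> real \<times> real" where
  "Phi pu = (let (p, u) = pu in (p^2 * (u + 1) - 1, 1 / p))"

definition is_trajectory :: "nat \<Rightarrow> (nat \<Rightarrow> real) \<Rightarrow> (nat \<Rightarrow> real) \<Rightarrow> bool" where
  "is_trajectory n p u \<longleftrightarrow>
     u 0 = 0 \<and> p n = 0 \<and> (\<forall>j<n. p j > 0) \<and>
     (\<forall>j. 1 \<le> j \<and> j \<le> n \<longrightarrow> (p j, u j) = Phi (p (j - 1), u (j - 1)))"

definition golden_ratio :: real where
  "golden_ratio = (1 + sqrt 5) / 2"

end

theory Submission
  imports Defs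
begin

text \<open>In the coordinates (p, e) with e = 1 - p u, the map Phi reads
  e' = e - p + 1/p, p' = p (1 - e'). The defect e stays positive along the trajectory:
  a point with e \<le> 0 and p \<ge> 1 keeps both properties forever and so never reaches p = 0,
  and a point with e \<le> 0 and p \<le> 1 can only come from such a point, never from e = 1.
  Hence p decreases. While p \<ge> 1, the quantity 1 - 1/p at least halves in every step,
  and while p \<le> 1, the quantity 1 - p at least doubles; together with the bounds
  p_0 < 5/3 and p_(n-1) > 3/5 this gives the exponential closeness of p_j to 1 from both
  ends, and e_j = 1 - p_j / p_(j-1) inherits it.\<close>

lemma divide_power_two_antimono:
  fixes c :: real
  assumes "m \<le> k" and "0 \<le> c"
  shows "c / 2 ^ k \<le> c / 2 ^ m"
  using assms by (intro divide_left_mono power_increasing) auto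

lemma golden_ratio_ge: "8 / 5 \<le> golden_ratio"
proof -
  have "(11 / 5 :: real)\<^sup>2 \<le> 5" by (simp add: power2_eq_square)
  then have "11 / 5 \<le> sqrt 5" by (rule real_le_rsqrt)
  then show ?thesis unfolding golden_ratio_def by simp
qed

locale trajectory_pe =
  fixes n :: nat and p e :: "nat \<Rightarrow> real"
  assumes e_0: "e 0 = 1"
    and p_n: "p n = 0"
    and p_pos: "j < n \<Longrightarrow> 0 < p j"
    and e_Suc: "j < n \<Longrightarrow> e (Suc j) = e j - p j + 1 / p j"
    and p_Suc: "j < n \<Longrightarrow> p (Suc j) = p j * (1 - e (Suc j))"
begin

lemma e_Suc_eq: "j < n \<Longrightarrow> e (Suc j) = 1 - p (Suc j) / p j"
  using p_Suc[of j] p_pos[of j] by (simp add: field_simps)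

lemma e_n: "0 < n \<Longrightarrow> e n = 1"
  using e_Suc_eq[of "n - 1"] p_n by simp

lemma forward_invariant:
  assumes "j < n" and "1 \<le> p j" and "e j \<le> 0"
  shows "1 \<le> p (Suc j) \<and> e (Suc j) \<le> 0"
proof -
  have "1 / p j \<le> 1" using assms(2) by simp
  then have e': "e (Suc j) \<le> 0" using e_Suc[OF assms(1)] assms(2,3) by linarith
  then have "p j \<le> p (Suc j)" using p_Suc[OF assms(1)] assms(2) by (simp add: mult_le_cancel_left1)
  with e' assms(2) show ?thesis by linarith
qed

lemma backward_invariant:
  assumes "j < n" and "p (Suc j) \<le> 1" and "e (Suc j) \<le> 0"
  shows "p j \<le> 1 \<and> e j \<le> 0"
proof -
  have pos: "0 < p j" using p_pos[OF assms(1)] .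
  then have "p j \<le> p (Suc j)" using p_Suc[OF assms(1)] assms(3) by (simp add: mult_le_cancel_left1)
  then have le1: "p j \<le> 1" using assms(2) by linarith
  then have "p j \<le> 1 / p j" using pos by (simp add: le_divide_eq power2_eq_square[symmetric] power_le_one)
  then show ?thesis using e_Suc[OF assms(1)] assms(3) le1 by linarith
qed

lemma e_pos:
  assumes "j \<le> n"
  shows "0 < e j"
proof (rule ccontr)
  assume "\<not> 0 < e j"
  then have e_j: "e j \<le> 0" by simp
  show False
  proof (cases "1 \<le> p j")
    case True
    from assms have "1 \<le> p n \<and> e n \<le> 0"
    proof (induction rule: dec_induct)
      case base
      show ?case using True e_j by simp
    next
      case (step i)
      then show ?case using forward_invariant by blast
    qed
    then show False using p_n by simp
  next
    case False
    have "0 \<le> j" by simp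
    then have "p 0 \<le> 1 \<and> e 0 \<le> 0"
    proof (induction rule: inc_induct)
      case base
      show ?case using False e_j by simp
    next
      case (step i)
      then show ?case using backward_invariant assms by simp
    qed
    then show False using e_0 by simp
  qed
qed

lemma p_Suc_less: "j < n \<Longrightarrow> p (Suc j) < p j"
  using p_Suc[of j] p_pos[of j] e_pos[of "Suc j"] by (simp add: mult_less_cancel_left1)

lemma p_antimono:
  assumes "i \<le> j" and "j \<le> n"
  shows "p j \<le> p i"
  using assms
proof (induction rule: dec_induct)
  case base
  show ?case by simp
next
  case (step k)
  then show ?case using p_Suc_less[of k] by simp
qed

lemma p_0_less:
  assumes "0 < n"
  shows "p 0 < 5 / 3"
proof (rule ccontr)
  assume "\<not> p 0 < 5 / 3"
  then have "1 / p 0 \<le> 3 / 5" by (simp add: divide_le_eq)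
  moreover have "0 < e 1" using e_pos assms by simp
  ultimately show False using e_Suc[OF assms] e_0 \<open>\<not> p 0 < 5 / 3\<close> by simp
qed

lemma p_last_greater:
  assumes "0 < n"
  shows "3 / 5 < p (n - 1)"
proof (rule ccontr)
  assume small: "\<not> 3 / 5 < p (n - 1)"
  have j: "n - 1 < n" and sj: "Suc (n - 1) = n" using assms by simp_all
  have "5 / 3 \<le> 1 / p (n - 1)" using small p_pos[OF j] by (simp add: le_divide_eq)
  moreover have "0 < e (n - 1)" using e_pos by simp
  ultimately show False
    using e_Suc[OF j] e_n[OF assms] small unfolding sj by linarith
qed

text \<open>Positivity of the next defect, e_(k+2) > 0, is what forces the halving.\<close>
lemma inv_p_halving:
  assumes "Suc k < n" and "1 \<le> p (Suc k)"
  shows "1 - 1 / p (Suc k) < (1 - 1 / p k) / 2"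
proof -
  define q where "q = p (Suc k)"
  have k: "k < n" using assms(1) by simp
  have q: "1 \<le> q" using assms(2) q_def by simp
  have "p (Suc k) - 1 / p (Suc k) < e (Suc k)"
    using e_Suc[OF assms(1)] e_pos[of "Suc (Suc k)"] assms(1) by simp
  then have "1 / p k < (1 - q + 1 / q) / q"
    using e_Suc_eq[OF k] p_pos[OF k] q by (simp add: q_def field_simps)
  also have "\<dots> \<le> 2 / q - 1"
    using q by (simp add: field_simps)
  finally show ?thesis unfolding q_def by simp
qed

lemma inv_p_le: "j < n \<Longrightarrow> 1 - 1 / p j \<le> (2 / 5) / 2 ^ j"
proof (induction j)
  case 0
  have "0 < p 0" using p_pos 0 by simp
  then have "3 / 5 \<le> 1 / p 0" using p_0_less 0 by (simp add: le_divide_eq)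
  then show ?case by simp
next
  case (Suc j)
  show ?case
  proof (cases "1 \<le> p (Suc j)")
    case True
    have "1 - 1 / p (Suc j) < (1 - 1 / p j) / 2" using inv_p_halving Suc.prems True .
    also have "\<dots> \<le> (2 / 5) / 2 ^ Suc j" using Suc by simp
    finally show ?thesis by simp
  next
    case False
    then have "1 - 1 / p (Suc j) < 0" using p_pos[OF Suc.prems] by (simp add: field_simps)
    moreover have "0 \<le> (2 / 5 :: real) / 2 ^ Suc j" by simp
    ultimately show ?thesis by linarith
  qed
qed

text \<open>Positivity of the current defect e_i is what forces the doubling.\<close>
lemma one_minus_p_doubling:
  assumes "i < n" and "p i \<le> 1"
  shows "2 * (1 - p i) < 1 - p (Suc i)"
proof -
  have pos: "0 < p i" using p_pos[OF assms(1)] .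
  have "1 / p i - p i < e (Suc i)"
    using e_Suc[OF assms(1)] e_pos[of i] assms(1) by simp
  then have "p (Suc i) < p i * (1 - (1 / p i - p i))"
    using p_Suc[OF assms(1)] pos by (simp add: mult_strict_left_mono)
  also have "\<dots> = p i - 1 + p i * p i" using pos by (simp add: field_simps)
  also have "\<dots> \<le> 2 * p i - 1" using assms(2) pos by (simp add: mult_le_cancel_left1)
  finally show ?thesis by simp
qed

lemma one_minus_p_le:
  assumes "j < n"
  shows "1 - p j \<le> (4 / 5) / 2 ^ (n - j)"
  using assms
proof (induction rule: strict_inc_induct)
  case (base i)
  then show ?case using p_last_greater by simp
next
  case (step i)
  show ?case
  proof (cases "p i \<le> 1")
    case True
    have "n - i = Suc (n - Suc i)" using step.hyps by simp
    then have "(1 - p (Suc i)) / 2 \<le> (4 / 5) / 2 ^ (n - i)" using step.IH by simp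
    then show ?thesis using one_minus_p_doubling[of i] step.hyps True by simp
  next
    case False
    moreover have "0 \<le> (4 / 5 :: real) / 2 ^ (n - i)" by simp
    ultimately show ?thesis by linarith
  qed
qed

lemma abs_p_minus_one_le:
  assumes "j \<le> n"
  shows "\<bar>p j - 1\<bar> \<le> 1 / 2 ^ min j (n - j)"
proof (cases "j = n")
  case True
  then show ?thesis using p_n by simp
next
  case False
  then have j: "j < n" using assms by simp
  have "p j - 1 \<le> 1 / 2 ^ j"
  proof (cases "1 \<le> p j")
    case True
    have "p j \<le> 5 / 3" using p_antimono[of 0 j] p_0_less j by simp
    have "p j - 1 = p j * (1 - 1 / p j)" using p_pos[OF j] by (simp add: field_simps)
    also have "\<dots> \<le> 5 / 3 * ((2 / 5) / 2 ^ j)"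
      using inv_p_le[OF j] \<open>p j \<le> 5 / 3\<close> True by (intro mult_mono) auto
    also have "\<dots> \<le> 1 / 2 ^ j" by (simp add: field_simps)
    finally show ?thesis .
  next
    case False
    have "0 \<le> 1 / (2::real) ^ j" by simp
    with False show ?thesis by linarith
  qed
  moreover have "1 - p j \<le> 1 / 2 ^ (n - j)"
    using one_minus_p_le[OF j] divide_right_mono[of "4 / 5" 1 "(2::real) ^ (n - j)"] by simp
  ultimately show ?thesis
    using divide_power_two_antimono[of "min j (n - j)" j 1]
      divide_power_two_antimono[of "min j (n - j)" "n - j" 1] by auto
qed

lemma e_le:
  assumes "j \<le> n"
  shows "e j \<le> (8 / 5) / 2 ^ min j (n - j)"
proof (cases "j = 0 \<or> j = n")
  case True
  then have "e j = 1" using e_0 e_n by (cases "n = 0") auto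
  moreover have "min j (n - j) = 0" using True by auto
  ultimately show ?thesis by simp
next
  case False
  then obtain k where k: "j = Suc k" and j: "j < n" using assms by (cases j) auto
  then have "k < n" by simp
  have right: "1 - p j \<le> (4 / 5) / 2 ^ min j (n - j)"
    using one_minus_p_le[OF j] divide_power_two_antimono[of "min j (n - j)" "n - j" "4 / 5"]
    by linarith
  have pos: "0 < p k" "0 < p j" using p_pos \<open>k < n\<close> j by auto
  show ?thesis
  proof (cases "p k \<le> 1")
    case True
    have "p j \<le> p j / p k" using pos True by (simp add: le_divide_eq mult_le_cancel_left1)
    then have "e j \<le> 1 - p j" using e_Suc_eq[OF \<open>k < n\<close>] k by simp
    moreover have "(4 / 5) / 2 ^ min j (n - j) \<le> (8 / 5 :: real) / 2 ^ min j (n - j)"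
      by (intro divide_right_mono) simp_all
    ultimately show ?thesis using right by linarith
  next
    case False
    have "(2 / 5) / 2 ^ k = (4 / 5) / (2::real) ^ j" using k by simp
    then have left: "1 - 1 / p k \<le> (4 / 5) / 2 ^ min j (n - j)"
      using inv_p_le[OF \<open>k < n\<close>] divide_power_two_antimono[of "min j (n - j)" j "4 / 5"]
      by linarith
    have "(1 - p j) / p k \<le> max 0 (1 - p j)"
      using False pos by (simp add: divide_le_eq max_def mult_le_cancel_left1)
    also have "\<dots> \<le> (4 / 5) / 2 ^ min j (n - j)" using right by simp
    finally have "e j \<le> (4 / 5) / 2 ^ min j (n - j) + (4 / 5) / 2 ^ min j (n - j)"
      using left e_Suc_eq[OF \<open>k < n\<close>] k pos by (simp add: diff_divide_distrib)
    then show ?thesis by simp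
  qed
qed

end

lemma trajectory_pe_of_is_trajectory:
  assumes "is_trajectory n p u"
  shows "trajectory_pe n p (\<lambda>j. 1 - p j * u j)"
proof -
  have pos: "\<And>j. j < n \<Longrightarrow> 0 < p j" and "u 0 = 0" "p n = 0"
    using assms unfolding is_trajectory_def by auto
  have step: "p (Suc j) = p j ^ 2 * (u j + 1) - 1 \<and> u (Suc j) = 1 / p j" if "j < n" for j
  proof -
    have "(p (Suc j), u (Suc j)) = Phi (p j, u j)"
      using assms that unfolding is_trajectory_def by (metis Suc_leI diff_Suc_1 le_add1 plus_1_eq_Suc)
    then show ?thesis unfolding Phi_def by simp
  qed
  show ?thesis
  proof
    fix j assume j: "j < n"
    have p': "p (Suc j) = p j ^ 2 * (u j + 1) - 1" and u': "u (Suc j) = 1 / p j"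
      using step[OF j] by simp_all
    show "1 - p (Suc j) * u (Suc j) = 1 - p j * u j - p j + 1 / p j"
      unfolding p' u' using pos[OF j] by (simp add: field_simps power2_eq_square)
    show "p (Suc j) = p j * (1 - (1 - p (Suc j) * u (Suc j)))"
      unfolding u' using pos[OF j] by simp
  qed (use pos \<open>u 0 = 0\<close> \<open>p n = 0\<close> in auto)
qed

theorem lemma7:
  fixes n :: nat and p u :: "nat \<Rightarrow> real"
  assumes "n \<ge> 1" and "is_trajectory n p u"
  shows "\<forall>j \<le> n. \<bar>p j - 1\<bar> \<le> 2 powi (- int (min j (n - j))) \<and>
            0 < 1 - p j * u j \<and>
            1 - p j * u j \<le> golden_ratio * 2 powi (- int (min j (n - j)))"
proof (intro allI impI)
  fix j assume j: "j \<le> n"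
  interpret trajectory_pe n p "\<lambda>j. 1 - p j * u j"
    using trajectory_pe_of_is_trajectory[OF assms(2)] .
  define m where "m = min j (n - j)"
  have powi_eq: "2 powi (- int m) = 1 / (2::real) ^ m"
    by (simp add: power_int_minus_divide)
  have "(8 / 5) / 2 ^ m \<le> golden_ratio / 2 ^ m"
    using golden_ratio_ge by (intro divide_right_mono) simp_all
  also have "\<dots> = golden_ratio * (1 / 2 ^ m)" by simp
  finally have "(8 / 5) / 2 ^ m \<le> golden_ratio * (1 / 2 ^ m)" .
  then show "\<bar>p j - 1\<bar> \<le> 2 powi (- int (min j (n - j))) \<and>
            0 < 1 - p j * u j \<and>
            1 - p j * u j \<le> golden_ratio * 2 powi (- int (min j (n - j)))"
    using abs_p_minus_one_le[OF j] e_pos[OF j] e_le[OF j]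
    unfolding m_def[symmetric] powi_eq by linarith
qed

end
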